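(* Let $\mu$ be a probability measure on $\mathbb{R}$ with characteristic function $\varphi(t)=\int e^{itx}\mu(dx)$, and let $(S_n)$ be a random walk with $S_0=0$ and step distribution $\mu$. Assume there is $\alpha>0$ such that $\mathbb{P}(S_n<0)\le e^{-\alpha n}$ along some subsequence of $n$. Then for all $t\in\mathbb{R}$ with $|\varphi(t)|>e^{-\alpha}$, along this subsequence, $$\lim_{n\to\infty}\mathbb{E}\big(e^{itS_n}\mathbf{1}_{\{S_n\ge0\}}\big)^{1/n}=\varphi(t).$$ In particular, under this assumption $\varphi$ is determined on some neighborhood of $0$ by the restrictions of the laws of $S_n$ to $[0,\infty)$. *)

theory Defs
  imports "HOL-Probability.Probability"
begin

text \<open>Law of the random walk S_n with S_0 = 0 and step distribution mu:
  the n-fold convolution power of mu (the law of S_0 is the Dirac measure at 0).\<close>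
primrec conv_pow :: "real measure \<Rightarrow> nat \<Rightarrow> real measure" where
  "conv_pow M 0 = return borel 0"
| "conv_pow M (Suc n) = convolution M (conv_pow M n)"

definition pos_char :: "real measure \<Rightarrow> nat \<Rightarrow> real \<Rightarrow> complex" where
  "pos_char M n t = (CLINT x | conv_pow M n. indicator {0..} x * iexp (t * x))"

end

theory Submission
  imports Defs
begin

(* Since phi(t)^n = E(e^{itS_n} 1{S_n >= 0})
   + E(e^{itS_n} 1{S_n < 0}) and the last term has modulus at most P(S_n < 0) <= e^{-alpha n},
   the ratio of the positive part to phi(t)^n tends to 1 whenever |phi(t)| > e^{-alpha}; its
   n-th root taken near 1, times phi(t), gives the first claim.
   For the second, let nu (characteristic function psi) have the same restrictions to [0,oo).
   Then also P(S_n < 0) is the same for both walks, so |psi^n - phi^n| <= 2 e^{-alpha n}. On a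
   ball around 0 where |phi| > e^{-alpha/2} the quotient a = psi/phi therefore satisfies
   |a^n - 1| <= 2 e^{-alpha n/2} uniformly. Write a = exp h with h continuous and h(0) = 0: the
   connected set n h(ball) contains 0 and avoids the annulus 1 <= |w| <= 2, so |h| < 1/n for all
   large n of the subsequence. Hence h = 0 and psi = phi on the ball. *)

lemma real_distribution_conv_pow:
  assumes "real_distribution M"
  shows "real_distribution (conv_pow M n)"
proof (induction n)
  case 0
  show ?case
    by (auto simp: real_distribution_def real_distribution_axioms_def intro!: prob_space_return)
next
  case (Suc n)
  interpret A: real_distribution M by fact
  interpret B: real_distribution "conv_pow M n" by fact
  have "prob_space (M \<Otimes>\<^sub>M conv_pow M n)"
    by (intro prob_space_pair A.prob_space_axioms B.prob_space_axioms)
  then have "prob_space (convolution M (conv_pow M n))"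
    unfolding convolution_def
    by (rule prob_space.prob_space_distr) (simp add: measurable_pair_measure)
  then show ?case
    by (simp add: real_distribution_def real_distribution_axioms_def)
qed

lemma sets_conv_pow [simp]: "sets (conv_pow M n) = sets borel"
  by (cases n) auto

lemma char_convolution:
  assumes "real_distribution M" and "real_distribution N"
  shows "char (convolution M N) t = char M t * char N t"
proof -
  interpret M: real_distribution M by fact
  interpret N: real_distribution N by fact
  interpret P: pair_sigma_finite M N
    by (simp add: pair_sigma_finite_def M.sigma_finite_measure N.sigma_finite_measure)
  interpret PP: prob_space "M \<Otimes>\<^sub>M N"
    by (intro prob_space_pair M.prob_space_axioms N.prob_space_axioms)
  have [measurable_cong]: "sets M = sets borel" "sets N = sets borel"
    by simp_all
  have int: "integrable (M \<Otimes>\<^sub>M N) (\<lambda>p. iexp (t * fst p) * iexp (t * snd p))"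
    by (rule PP.integrable_const_bound[where B=1]) (auto simp: norm_mult)
  have "char (convolution M N) t = (CLINT p|M \<Otimes>\<^sub>M N. iexp (t * fst p) * iexp (t * snd p))"
    unfolding char_def convolution_def
    by (subst integral_distr) (auto simp: case_prod_beta distrib_left exp_add)
  also have "\<dots> = (CLINT x|M. (CLINT y|N. iexp (t * x) * iexp (t * y)))"
    using P.integral_fst'[OF int] by simp
  also have "\<dots> = char M t * char N t"
    by (simp add: char_def)
  finally show ?thesis .
qed

lemma char_conv_pow:
  assumes "real_distribution M"
  shows "char (conv_pow M n) t = char M t ^ n"
proof (induction n)
  case 0
  show ?case by (simp add: char_def integral_return)
next
  case (Suc n)
  then show ?case
    using char_convolution[OF assms real_distribution_conv_pow[OF assms]] by simp
qed

lemma (in real_distribution) norm_char_minus_nonneg_part_le: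
  "cmod (char M t - (CLINT x|M. indicator {0..} x * iexp (t * x))) \<le> measure M {..<0}"
proof -
  have "integrable M (\<lambda>x. indicator {0..} x * iexp (t * x) :: complex)"
    by (rule integrable_const_bound[where B=1]) (auto simp: norm_mult split: split_indicator)
  then have "char M t - (CLINT x|M. indicator {0..} x * iexp (t * x)) =
      (CLINT x|M. iexp (t * x) - indicator {0..} x * iexp (t * x))"
    unfolding char_def by (simp add: integrable_iexp)
  also have "\<dots> = (CLINT x|M. indicator {..<0} x * iexp (t * x))"
    by (rule Bochner_Integration.integral_cong) (auto split: split_indicator)
  also have "cmod \<dots> \<le> (\<integral>x. norm (indicator {..<0} x * iexp (t * x) :: complex) \<partial>M)"
    by (rule integral_norm_bound)
  also have "\<dots> = (\<integral>x. indicator {..<0} x \<partial>M)"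
    by (rule Bochner_Integration.integral_cong) (auto simp: norm_mult split: split_indicator)
  finally show ?thesis by simp
qed

lemma norm_char_power_minus_pos_char_le:
  assumes "real_distribution M"
  shows "cmod (char M t ^ n - pos_char M n t) \<le> measure (conv_pow M n) {..<0}"
  using real_distribution.norm_char_minus_nonneg_part_le[OF real_distribution_conv_pow[OF assms]]
  by (simp add: pos_char_def char_conv_pow[OF assms])

lemma integral_indicator_eq_if_measure_eq_on_subsets:
  fixes f :: "'a \<Rightarrow> 'b::{banach, second_countable_topology}"
  assumes "finite_measure M" and "finite_measure N" and sets_eq: "sets M = sets N"
    and S: "S \<in> sets M" and eq: "\<And>A. A \<in> sets M \<Longrightarrow> A \<subseteq> S \<Longrightarrow> measure M A = measure N A"
    and f: "f \<in> borel_measurable M"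
  shows "(\<integral>x. indicator S x *\<^sub>R f x \<partial>M) = (\<integral>x. indicator S x *\<^sub>R f x \<partial>N)"
proof -
  have emeasure_density: "emeasure (density K (\<lambda>x. ennreal (indicator S x))) A = measure K (S \<inter> A)"
    if "finite_measure K" "sets K = sets M" "A \<in> sets M" for K A
  proof -
    interpret K: finite_measure K by fact
    have "emeasure (density K (\<lambda>x. ennreal (indicator S x))) A = (\<integral>\<^sup>+ x. ennreal (indicator S x) * indicator A x \<partial>K)"
      by (rule emeasure_density) (use that S in auto)
    also have "\<dots> = (\<integral>\<^sup>+ x. indicator (S \<inter> A) x \<partial>K)"
      by (intro nn_integral_cong) (simp split: split_indicator)
    also have "\<dots> = measure K (S \<inter> A)"
      using that S by (simp add: K.emeasure_eq_measure)
    finally show ?thesis .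
  qed
  have "density M (\<lambda>x. ennreal (indicator S x)) = density N (\<lambda>x. ennreal (indicator S x))"
    by (rule measure_eqI) (use sets_eq S in \<open>auto simp: emeasure_density assms eq\<close>)
  moreover have "(\<integral>x. indicator S x *\<^sub>R f x \<partial>K) = (\<integral>x. f x \<partial>density K (\<lambda>x. ennreal (indicator S x)))"
    if "sets K = sets M" for K
  proof -
    have "f \<in> borel_measurable K"
      using f that by (simp cong: measurable_cong_sets)
    moreover have "indicator S \<in> borel_measurable K"
      using S that by simp
    ultimately show ?thesis
      by (subst integral_density) auto
  qed
  ultimately show ?thesis
    using sets_eq by metis
qed

lemma roots_tendsto_1:
  fixes q :: "'a \<Rightarrow> complex"
  assumes q: "(q \<longlongrightarrow> 1) F" and n: "\<forall>\<^sub>F x in F. n x > 0"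
  shows "\<exists>z. (\<forall>\<^sub>F x in F. z x ^ n x = q x) \<and> (z \<longlongrightarrow> 1) F"
proof (intro exI conjI)
  have Ln: "((\<lambda>x. Ln (q x)) \<longlongrightarrow> 0) F"
    using tendsto_Ln[OF q] by (simp add: complex_nonpos_Reals_iff)
  show "\<forall>\<^sub>F x in F. exp (Ln (q x) / of_nat (n x)) ^ n x = q x"
    using n tendsto_imp_eventually_ne[OF q one_neq_zero]
    by eventually_elim (simp flip: exp_of_nat_mult)
  have "((\<lambda>x. Ln (q x) / of_nat (n x)) \<longlongrightarrow> 0) F"
  proof (rule Lim_null_comparison)
    show "\<forall>\<^sub>F x in F. norm (Ln (q x) / of_nat (n x)) \<le> cmod (Ln (q x))"
      using n by eventually_elim (simp add: norm_divide divide_le_eq mult_le_cancel_left1)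
    show "((\<lambda>x. cmod (Ln (q x))) \<longlongrightarrow> 0) F"
      using tendsto_norm[OF Ln] by simp
  qed
  then show "((\<lambda>x. exp (Ln (q x) / of_nat (n x))) \<longlongrightarrow> 1) F"
    using tendsto_exp by fastforce
qed

lemma power_subseq_tendsto_0:
  fixes c :: real
  assumes "0 \<le> c" "c < 1" and "strict_mono r"
  shows "(\<lambda>k. c ^ r k) \<longlonglongrightarrow> 0"
proof -
  have "(\<lambda>n. c ^ n) \<longlonglongrightarrow> 0"
    by (rule LIMSEQ_power_zero) (use assms in simp)
  then show ?thesis
    using filterlim_compose filterlim_subseq[OF assms(3)] by blast
qed

lemma pos_char_root_tendsto_char:
  assumes M: "real_distribution M" and r: "strict_mono r"
    and neg: "\<And>k. measure (conv_pow M (r k)) {..<0} \<le> exp (- \<alpha> * real (r k))"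
    and big: "cmod (char M t) > exp (- \<alpha>)"
  shows "\<exists>z. (\<forall>\<^sub>F k in sequentially. z k ^ r k = pos_char M (r k) t) \<and> z \<longlonglongrightarrow> char M t"
proof -
  define \<phi> where "\<phi> = char M t"
  have "cmod \<phi> > 0"
    using big unfolding \<phi>_def by (meson exp_gt_zero less_trans)
  define c where "c = exp (- \<alpha>) / cmod \<phi>"
  have c: "0 \<le> c" "c < 1"
    unfolding c_def using \<open>cmod \<phi> > 0\<close> big \<phi>_def by simp_all
  define q where "q k = pos_char M (r k) t / \<phi> ^ r k" for k
  have "cmod (q k - 1) \<le> c ^ r k" for k
  proof -
    have "cmod (pos_char M (r k) t - \<phi> ^ r k) \<le> exp (- \<alpha>) ^ r k"
      using norm_char_power_minus_pos_char_le[OF M, of t "r k"] neg[of k]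
      by (simp add: \<phi>_def norm_minus_commute mult.commute flip: exp_of_nat_mult)
    moreover have "q k - 1 = (pos_char M (r k) t - \<phi> ^ r k) / \<phi> ^ r k"
      using \<open>cmod \<phi> > 0\<close> by (simp add: q_def diff_divide_distrib)
    ultimately have "cmod (q k - 1) \<le> exp (- \<alpha>) ^ r k / cmod \<phi> ^ r k"
      by (simp add: norm_divide norm_power divide_right_mono)
    then show ?thesis
      by (simp add: c_def power_divide)
  qed
  then have "(\<lambda>k. q k - 1) \<longlonglongrightarrow> 0"
    by (intro Lim_null_comparison[OF _ power_subseq_tendsto_0[OF c r]]) simp
  then have "q \<longlonglongrightarrow> 1"
    using LIM_zero_iff by blast
  moreover have "\<forall>\<^sub>F k in sequentially. r k > 0"
    using eventually_gt_at_top[of 0]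
    by eventually_elim (metis r strict_mono_imp_increasing order.strict_trans2)
  ultimately obtain w where w: "\<forall>\<^sub>F k in sequentially. w k ^ r k = q k" and "w \<longlonglongrightarrow> 1"
    using roots_tendsto_1 by blast
  have "\<forall>\<^sub>F k in sequentially. (\<phi> * w k) ^ r k = pos_char M (r k) t"
    using w by eventually_elim (use \<open>cmod \<phi> > 0\<close> in \<open>simp add: q_def power_mult_distrib\<close>)
  moreover have "(\<lambda>k. \<phi> * w k) \<longlonglongrightarrow> \<phi>"
    using tendsto_mult[OF tendsto_const \<open>w \<longlonglongrightarrow> 1\<close>] by simp
  ultimately show ?thesis
    unfolding \<phi>_def by (intro exI[of _ "\<lambda>k. char M t * w k"] conjI)
qed

lemma norm_lt_1_or_gt_2_if_exp_close_to_1: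
  fixes z :: complex
  assumes "cmod (exp z - 1) < 1/4"
  shows "cmod z < 1 \<or> cmod z > 2"
proof -
  have Ln: "cmod (Ln (exp z)) \<le> 1/2"
    using norm_Ln_le[of "exp z - 1"] assms by simp
  obtain n :: int where n: "z = Ln (exp z) + (of_int (2 * n) * pi) * \<i>"
    using exp_eq[of z "Ln (exp z)"] by auto
  show ?thesis
  proof (cases "n = 0")
    case True
    then show ?thesis
      using n Ln by simp
  next
    case False
    then have "2 * pi \<le> \<bar>2 * real_of_int n\<bar> * pi"
      by (simp add: abs_mult)
    also have "\<dots> = cmod (z - Ln (exp z))"
      by (subst n) (simp add: norm_mult)
    also have "\<dots> \<le> cmod z + cmod (Ln (exp z))"
      by (rule norm_triangle_ineq4)
    finally show ?thesis
      using Ln pi_gt3 by linarith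
  qed
qed

lemma connected_subset_ball_if_exp_close_to_1:
  fixes T :: "complex set"
  assumes "connected T" and "0 \<in> T" and close: "\<And>w. w \<in> T \<Longrightarrow> cmod (exp w - 1) < 1/4"
  shows "T \<subseteq> ball 0 1"
proof -
  have T: "T \<subseteq> ball 0 1 \<union> - cball 0 2"
    using norm_lt_1_or_gt_2_if_exp_close_to_1[OF close] by force
  have "ball 0 1 \<inter> T = {} \<or> - cball 0 2 \<inter> T = {}"
    by (rule connectedD[OF \<open>connected T\<close> _ _ _ T]) auto
  then show ?thesis
    using T \<open>0 \<in> T\<close> by auto
qed

lemma eq_1_if_powers_uniformly_close_to_1:
  fixes f :: "'a::real_normed_vector \<Rightarrow> complex" and n :: "nat \<Rightarrow> nat"
  assumes S: "contractible S" "c \<in> S" "s \<in> S"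
    and f: "continuous_on S f" "f c = 1"
    and n: "filterlim n at_top sequentially"
    and close: "\<forall>\<^sub>F k in sequentially. \<forall>x\<in>S. cmod (f x ^ n k - 1) < 1/4"
  shows "f s = 1"
proof -
  have "\<forall>\<^sub>F k in sequentially. n k > 0"
    using filterlim_at_top[THEN iffD1, OF n, rule_format, of 1] by (rule eventually_mono) simp
  then obtain k where "n k > 0" and "\<forall>x\<in>S. cmod (f x ^ n k - 1) < 1/4"
    using eventually_happens'[OF trivial_limit_sequentially eventually_conj[OF _ close]] by blast
  then have "f x \<noteq> 0" if "x \<in> S" for x
    using that by (fastforce simp: power_0_left)
  then obtain g where g: "continuous_on S g" "\<And>x. x \<in> S \<Longrightarrow> f x = exp (g x)"
    using continuous_logarithm_on_contractible[OF f(1) S(1)] by metis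
  define h where "h x = g x - g c" for x
  have f_h: "f x = exp (h x)" if "x \<in> S" for x
    using g(2)[OF that] g(2)[OF S(2)] f(2) by (simp add: h_def exp_diff)
  have "\<forall>\<^sub>F k in sequentially. cmod (h s) \<le> inverse (real (n k))"
    using close \<open>\<forall>\<^sub>F k in sequentially. n k > 0\<close>
  proof eventually_elim
    case (elim k)
    have "(\<lambda>x. of_nat (n k) * h x) ` S \<subseteq> ball 0 1"
    proof (rule connected_subset_ball_if_exp_close_to_1)
      show "connected ((\<lambda>x. of_nat (n k) * h x) ` S)"
        using g(1) contractible_imp_connected[OF S(1)]
        unfolding h_def by (intro connected_continuous_image continuous_intros) auto
      show "0 \<in> (\<lambda>x. of_nat (n k) * h x) ` S"
        using S(2) by (force simp: h_def)
      show "cmod (exp w - 1) < 1/4" if "w \<in> (\<lambda>x. of_nat (n k) * h x) ` S" for w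
        using that elim(1) f_h by (auto simp: exp_of_nat_mult)
    qed
    then have "real (n k) * cmod (h s) < 1"
      using S(3) by (auto simp: norm_mult)
    then show ?case
      using elim(2) by (simp add: field_simps)
  qed
  moreover have "(\<lambda>k. inverse (real (n k))) \<longlonglongrightarrow> 0"
    by (rule tendsto_inverse_0_at_top[OF filterlim_compose[OF filterlim_real_sequentially n]])
  ultimately have "cmod (h s) \<le> 0"
    using tendsto_le[OF trivial_limit_sequentially _ tendsto_const] by blast
  then show ?thesis
    using f_h[OF S(3)] by simp
qed

lemma norm_char_power_diff_le:
  assumes M: "real_distribution M" and N: "real_distribution N"
    and eq: "\<And>A. A \<in> sets borel \<Longrightarrow> A \<subseteq> {0..} \<Longrightarrow> measure (conv_pow N n) A = measure (conv_pow M n) A"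
  shows "cmod (char N t ^ n - char M t ^ n) \<le> 2 * measure (conv_pow M n) {..<0}"
proof -
  interpret M': real_distribution "conv_pow M n" by (rule real_distribution_conv_pow[OF M])
  interpret N': real_distribution "conv_pow N n" by (rule real_distribution_conv_pow[OF N])
  have "measure (conv_pow N n) {..<0} = measure (conv_pow M n) {..<0}"
    using M'.prob_compl[of "{0..}"] N'.prob_compl[of "{0..}"] eq[of "{0..}"]
    by (simp add: set_diff_eq not_le lessThan_def)
  moreover have "pos_char N n t = pos_char M n t"
    using integral_indicator_eq_if_measure_eq_on_subsets[of "conv_pow N n" "conv_pow M n" "{0..}"
        "\<lambda>x. iexp (t * x)"] eq
    by (simp add: pos_char_def M'.finite_measure_axioms N'.finite_measure_axioms
        scaleR_conv_of_real of_real_indicator)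
  ultimately show ?thesis
    using norm_char_power_minus_pos_char_le[OF M, of t n] norm_char_power_minus_pos_char_le[OF N, of t n]
      norm_triangle_ineq4[of "char N t ^ n - pos_char N n t" "char M t ^ n - pos_char M n t"]
    by simp
qed

lemma (in real_distribution) ex_ball_norm_char_gt:
  assumes "e < 1"
  obtains \<delta> where "\<delta> > 0" and "\<And>s. s \<in> ball (0::real) \<delta> \<Longrightarrow> cmod (char M s) > e"
proof -
  obtain \<delta> where "\<delta> > 0" and \<delta>: "\<And>s. dist s 0 < \<delta> \<Longrightarrow> dist (char M s) (char M 0) < 1 - e"
    using isCont_char[of 0] assms unfolding continuous_at_eps_delta by (metis diff_gt_0_iff_gt)
  have "cmod (char M s) > e" if "s \<in> ball 0 \<delta>" for s
    using \<delta>[of s] that norm_triangle_ineq2[of 1 "char M s"]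
    by (simp add: char_zero dist_norm norm_minus_commute)
  with \<open>\<delta> > 0\<close> show ?thesis
    using that by blast
qed

lemma char_eq_on_ball_if_nonneg_parts_eq:
  fixes r :: "nat \<Rightarrow> nat"
  assumes M: "real_distribution M" and N: "real_distribution N"
    and "\<alpha> > 0" and r: "strict_mono r"
    and neg: "\<And>k. measure (conv_pow M (r k)) {..<0} \<le> exp (- \<alpha> * real (r k))"
    and eq: "\<And>k A. A \<in> sets borel \<Longrightarrow> A \<subseteq> {0..} \<Longrightarrow>
               measure (conv_pow N (r k)) A = measure (conv_pow M (r k)) A"
    and big: "\<And>s. s \<in> ball 0 \<delta> \<Longrightarrow> cmod (char M s) > exp (- \<alpha> / 2)"
    and t: "t \<in> ball 0 \<delta>"
  shows "char N t = char M t"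
proof -
  interpret M: real_distribution M by fact
  interpret N: real_distribution N by fact
  define e where "e = exp (- \<alpha> / 2)"
  have e: "0 < e" "e < 1"
    using \<open>\<alpha> > 0\<close> by (simp_all add: e_def)
  have nz: "char M s \<noteq> 0" if "s \<in> ball 0 \<delta>" for s
    using big[OF that] by auto
  define a where "a s = char N s / char M s" for s
  have bound: "cmod (a s ^ r k - 1) \<le> 2 * e ^ r k" if s: "s \<in> ball 0 \<delta>" for s :: real and k
  proof -
    have "exp (- \<alpha> * real (r k)) = e ^ r k * e ^ r k"
      by (simp add: e_def flip: exp_of_nat_mult exp_add)
    then have "cmod (char N s ^ r k - char M s ^ r k) \<le> 2 * e ^ r k * e ^ r k"
      using norm_char_power_diff_le[OF M N eq[where k=k], of s] neg[of k] by simp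
    also have "\<dots> \<le> 2 * e ^ r k * cmod (char M s) ^ r k"
      using big[OF s] e by (intro mult_left_mono power_mono) (auto simp: e_def)
    finally have "cmod (char N s ^ r k - char M s ^ r k) \<le> 2 * e ^ r k * cmod (char M s) ^ r k" .
    moreover have "a s ^ r k - 1 = (char N s ^ r k - char M s ^ r k) / char M s ^ r k"
      using nz[OF s] by (simp add: a_def power_divide diff_divide_distrib)
    ultimately show ?thesis
      using nz[OF s] by (simp add: norm_divide norm_power divide_le_eq)
  qed
  have "\<forall>\<^sub>F k in sequentially. 2 * e ^ r k < 1/4"
    using tendsto_mult_right_zero[OF power_subseq_tendsto_0[OF less_imp_le[OF e(1)] e(2) r], of 2]
    by (rule order_tendstoD) simp
  then have "\<forall>\<^sub>F k in sequentially. \<forall>s\<in>ball 0 \<delta>. cmod (a s ^ r k - 1) < 1/4"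
    by (rule eventually_mono) (use bound in \<open>blast intro: le_less_trans\<close>)
  moreover have "continuous_on (ball 0 \<delta>) a"
    unfolding a_def using nz
    by (intro continuous_on_divide continuous_at_imp_continuous_on ballI M.isCont_char N.isCont_char)
      auto
  moreover have "0 \<in> ball 0 \<delta>"
    using t by simp
  ultimately have "a t = 1"
    using eq_1_if_powers_uniformly_close_to_1[of "ball 0 \<delta>" 0 t a r] t filterlim_subseq[OF r]
    by (simp add: convex_imp_contractible a_def M.char_zero N.char_zero)
  then show ?thesis
    using nz[OF t] by (simp add: a_def)
qed

theorem lemma2p1:
  fixes \<mu> :: "real measure" and \<alpha> :: real and r :: "nat \<Rightarrow> nat"
  assumes "real_distribution \<mu>"
    and "\<alpha> > 0"
    and "strict_mono r"
    and "\<And>k. measure (conv_pow \<mu> (r k)) {..<0} \<le> exp (- \<alpha> * real (r k))"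
  shows "(\<forall>t. cmod (char \<mu> t) > exp (- \<alpha>) \<longrightarrow>
           (\<exists>z :: nat \<Rightarrow> complex.
              (\<forall>\<^sub>F k in sequentially. z k ^ r k = pos_char \<mu> (r k) t) \<and>
              z \<longlonglongrightarrow> char \<mu> t))
      \<and> (\<exists>U. open U \<and> 0 \<in> U \<and>
           (\<forall>\<nu>. real_distribution \<nu> \<longrightarrow>
              (\<forall>k. \<forall>A \<in> sets borel. A \<subseteq> {0..} \<longrightarrow>
                  measure (conv_pow \<nu> (r k)) A = measure (conv_pow \<mu> (r k)) A) \<longrightarrow>
              (\<forall>t\<in>U. char \<nu> t = char \<mu> t)))"
proof -
  obtain \<delta> where "\<delta> > 0" and big: "\<And>s. s \<in> ball 0 \<delta> \<Longrightarrow> cmod (char \<mu> s) > exp (- \<alpha> / 2)"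
    using real_distribution.ex_ball_norm_char_gt[OF assms(1), of "exp (- \<alpha> / 2)"] assms(2) by auto
  show ?thesis
    by (intro conjI allI impI exI[of _ "ball 0 \<delta>"])
      (use pos_char_root_tendsto_char[OF assms(1,3,4)]
        char_eq_on_ball_if_nonneg_parts_eq[OF assms(1) _ assms(2,3,4) _ big] \<open>\<delta> > 0\<close> in auto)
qed

end
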